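(* Fix a finite monoid presentation $\langle A\mid R\rangle$ satisfying $C(4)$. There is an algorithm which, given $w\in A^*$ and a piece $p$, decides whether $w$ is $p$-active in constant time, i.e. in time bounded by a constant depending only on the presentation.
   Context: Relation words are the words occurring as a side of a pair in $R$. A piece is a word that is a factor of two distinct relation words, or occurs at two different (possibly overlapping) positions in a single relation word; $\varepsilon$ is a piece. $C(4)$: no relation word is a product of fewer than 4 pieces. For a relation word $u$, $X_u$ is its longest prefix that is a piece, $Z_u$ its longest suffix that is a piece, and $u=X_uY_uZ_u$ defines $Y_u$. A relation prefix of a word is a prefix of the form $aX_uY_u$ with $a\in A^*$ and $u$ a relation word. For a piece $p$, a word $w$ is $p$-active if $pw$ has a relation prefix $aX_uY_u$ with $|a|<|p|$. *)

theory Defs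
  imports Main "HOL-Library.Sublist"
begin

definition relword :: "('a list \<times> 'a list) set \<Rightarrow> 'a list \<Rightarrow> bool" where
  "relword R u \<longleftrightarrow> (\<exists>v. (u, v) \<in> R \<or> (v, u) \<in> R)"

definition piece :: "('a list \<times> 'a list) set \<Rightarrow> 'a list \<Rightarrow> bool" where
  "piece R p \<longleftrightarrow> p = [] \<or>
     (\<exists>u v. relword R u \<and> relword R v \<and> u \<noteq> v \<and> sublist p u \<and> sublist p v) \<or>
     (\<exists>u x y x' y'. relword R u \<and> u = x @ p @ y \<and> u = x' @ p @ y' \<and> length x \<noteq> length x')"

definition C4 :: "('a list \<times> 'a list) set \<Rightarrow> bool" where
  "C4 R \<longleftrightarrow> (\<forall>u. relword R u \<longrightarrow>
      \<not> (\<exists>ps. length ps < 4 \<and> (\<forall>q\<in>set ps. piece R q) \<and> concat ps = u))"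

definition Xw :: "('a list \<times> 'a list) set \<Rightarrow> 'a list \<Rightarrow> 'a list" where
  "Xw R u = take (GREATEST n. n \<le> length u \<and> piece R (take n u)) u"

definition Zw :: "('a list \<times> 'a list) set \<Rightarrow> 'a list \<Rightarrow> 'a list" where
  "Zw R u = drop (length u - (GREATEST n. n \<le> length u \<and> piece R (drop (length u - n) u))) u"

text \<open>Y_u defined by u = X_u Y_u Z_u.\<close>
definition Yw :: "('a list \<times> 'a list) set \<Rightarrow> 'a list \<Rightarrow> 'a list" where
  "Yw R u = drop (length (Xw R u)) (take (length u - length (Zw R u)) u)"

definition p_active :: "('a list \<times> 'a list) set \<Rightarrow> 'a list \<Rightarrow> 'a list \<Rightarrow> bool" where
  "p_active R p w \<longleftrightarrow>
     (\<exists>a u. relword R u \<and> length a < length p \<and> prefix (a @ Xw R u @ Yw R u) (p @ w))"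

end

theory Submission
  imports Defs
begin

text \<open>Whether \<open>w\<close> is \<open>p\<close>-active is decided by a prefix \<open>a X\<^sub>u Y\<^sub>u\<close> of \<open>p w\<close> with
  \<open>|a| < |p|\<close>, which is never longer than \<open>|p| + |u|\<close>. Since \<open>R\<close> is finite, the relation
  words have bounded length \<open>K\<close>, so only the first \<open>K\<close> letters of \<open>w\<close> matter, and a
  lookup table indexed by pieces and words of length at most \<open>K\<close> decides activity.\<close>

lemma prefix_take_iff:
  assumes "length xs \<le> n"
  shows "prefix xs (take n ys) \<longleftrightarrow> prefix xs ys"
proof
  show "prefix xs (take n ys) \<Longrightarrow> prefix xs ys"
    using take_is_prefix prefix_order.order_trans by blast
  show "prefix xs ys \<Longrightarrow> prefix xs (take n ys)"
    using assms by (auto simp: prefix_def)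
qed

lemma length_Xw_Yw_le: "length (Xw R u @ Yw R u) \<le> length u"
  unfolding Xw_def Yw_def by auto

lemma relword_length_le_sum:
  assumes "finite R" and "relword R u"
  shows "length u \<le> (\<Sum>(x, y)\<in>R. length x + length y)"
proof -
  obtain v where "(u, v) \<in> R \<or> (v, u) \<in> R"
    using assms(2) unfolding relword_def by blast
  then show ?thesis
    using member_le_sum[of _ R "\<lambda>(x, y). length x + length y"] assms(1)
    by fastforce
qed

lemma p_active_take_iff:
  assumes "\<And>u. relword R u \<Longrightarrow> length u \<le> K"
  shows "p_active R p (take K w) \<longleftrightarrow> p_active R p w"
proof -
  have "prefix (a @ Xw R u @ Yw R u) (p @ take K w) \<longleftrightarrow> prefix (a @ Xw R u @ Yw R u) (p @ w)"
    if "relword R u" and "length a < length p" for a u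
  proof -
    have "length (a @ Xw R u @ Yw R u) \<le> length p + K"
      using length_Xw_Yw_le[of R u] assms[OF that(1)] that(2) by simp
    then show ?thesis
      using prefix_take_iff[of "a @ Xw R u @ Yw R u" "length p + K" "p @ w"] by simp
  qed
  then show ?thesis unfolding p_active_def by blast
qed

theorem lemma6p16:
  fixes A :: "'a set" and R :: "('a list \<times> 'a list) set"
  assumes "finite A" and "finite R" and "R \<subseteq> lists A \<times> lists A" and "C4 R"
  shows "\<exists>K::nat. \<exists>T :: 'a list \<Rightarrow> 'a list \<Rightarrow> bool.
           \<forall>p w. piece R p \<longrightarrow> w \<in> lists A \<longrightarrow> (p_active R p w \<longleftrightarrow> T p (take K w))"
proof -
  define K where "K = (\<Sum>(x, y)\<in>R. length x + length y)"
  have "\<And>u. relword R u \<Longrightarrow> length u \<le> K"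
    unfolding K_def using relword_length_le_sum[OF assms(2)] .
  then have "p_active R p w \<longleftrightarrow> p_active R p (take K w)" for p w
    using p_active_take_iff by metis
  then show ?thesis by blast
qed

end
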